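(* Let $z=(z^+,z^-)$ be a bi-sequence of $n$ nonnegative integers, and let $f_z(a)=\sum_i|z_i^+-a_i^+|+\sum_i|z_i^--a_i^-|$. Let $d\in B_n$ satisfy $f_z(d)=\min_{a\in B_n}f_z(a)$. (1) There exists $d_*\in B_n$ with $d_{*i}^+\le z_i^+$ for all $i$ and $f_z(d_* )=f_z(d)$. (2) There exists $d_*\in B_n$ with $d_{*i}^-\le z_i^-$ for all $i$ and $f_z(d_* )=f_z(d)$.
   Context: $B_n$ is the set of all bi-degree sequences $a=(a^+,a^-)$ (out-degrees $a_i^+$, in-degrees $a_i^-$) of simple directed graphs (no loops, no multiple edges) on nodes $\{1,\dots,n\}$. *)

theory Defs
  imports Main
begin

(* Nodes are 0..<n (the paper's 1..n shifted). A simple directed graph on these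
   nodes is a set of arcs without loops; multiple arcs are impossible in a set. *)
definition simple_digraph :: "nat \<Rightarrow> (nat \<times> nat) set \<Rightarrow> bool" where
  "simple_digraph n E \<longleftrightarrow> E \<subseteq> {(i, j). i < n \<and> j < n \<and> i \<noteq> j}"

definition bidegree :: "nat \<Rightarrow> (nat \<times> nat) set \<Rightarrow> (nat \<Rightarrow> nat) \<times> (nat \<Rightarrow> nat)" where
  "bidegree n E =
     ((\<lambda>i. if i < n then card {j. (i, j) \<in> E} else 0),
      (\<lambda>i. if i < n then card {j. (j, i) \<in> E} else 0))"

definition B :: "nat \<Rightarrow> ((nat \<Rightarrow> nat) \<times> (nat \<Rightarrow> nat)) set" where
  "B n = {bidegree n E | E. simple_digraph n E}"

definition f :: "nat \<Rightarrow> (nat \<Rightarrow> nat) \<times> (nat \<Rightarrow> nat) \<Rightarrow> (nat \<Rightarrow> nat) \<times> (nat \<Rightarrow> nat) \<Rightarrow> int" where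
  "f n z a = (\<Sum>i<n. \<bar>int (fst z i) - int (fst a i)\<bar>) + (\<Sum>i<n. \<bar>int (snd z i) - int (snd a i)\<bar>)"

end

theory Submission
  imports Defs
begin

text \<open>Take a minimiser \<open>d\<close>, realised by a digraph \<open>E\<close>. If some out-degree exceeds
  its target, \<open>d\<^sup>+\<^sub>i > z\<^sup>+\<^sub>i\<close>, delete any arc \<open>(i, j)\<close>: the out-term at \<open>i\<close> drops by one and the
  in-term at \<open>j\<close> grows by at most one, so \<open>f\<^sub>z\<close> does not increase and, by minimality, stays
  equal. Induction on the number of arcs gives (1); reversing all arcs, which swaps
  out- and in-degrees, turns (1) into (2).\<close>

lemma simple_digraph_finite: "simple_digraph n E \<Longrightarrow> finite E"
  unfolding simple_digraph_def
  by (rule finite_subset[of _ "{..<n} \<times> {..<n}"]) auto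

lemma bidegree_Diff_arc:
  assumes "finite E" and "(i, j) \<in> E"
  shows "fst (bidegree n (E - {(i, j)})) = (fst (bidegree n E))(i := fst (bidegree n E) i - 1)"
    and "snd (bidegree n (E - {(i, j)})) = (snd (bidegree n E))(j := snd (bidegree n E) j - 1)"
proof -
  have "finite (E `` {i})" and "finite (E\<inverse> `` {j})"
    using assms(1) by simp_all
  then have fin: "finite {l. (i, l) \<in> E}" "finite {l. (l, j) \<in> E}"
    by (simp_all add: Image_singleton)
  have "card {l. (k, l) \<in> E - {(i, j)}}
      = (if k = i then card {l. (i, l) \<in> E} - 1 else card {l. (k, l) \<in> E})" for k
  proof -
    have "{l. (k, l) \<in> E - {(i, j)}} = (if k = i then {l. (i, l) \<in> E} - {j} else {l. (k, l) \<in> E})"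
      by auto
    then show ?thesis
      using assms(2) fin(1) by simp
  qed
  moreover have "card {l. (l, k) \<in> E - {(i, j)}}
      = (if k = j then card {l. (l, j) \<in> E} - 1 else card {l. (l, k) \<in> E})" for k
  proof -
    have "{l. (l, k) \<in> E - {(i, j)}} = (if k = j then {l. (l, j) \<in> E} - {i} else {l. (l, k) \<in> E})"
      by auto
    then show ?thesis
      using assms(2) fin(2) by simp
  qed
  ultimately show "fst (bidegree n (E - {(i, j)})) = (fst (bidegree n E))(i := fst (bidegree n E) i - 1)"
    and "snd (bidegree n (E - {(i, j)})) = (snd (bidegree n E))(j := snd (bidegree n E) j - 1)"
    unfolding bidegree_def by (auto simp del: Diff_iff)
qed

lemma sum_abs_diff_fun_upd:
  fixes x y :: "'a \<Rightarrow> nat"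
  assumes "finite A" and "i \<in> A"
  shows "(\<Sum>k\<in>A. \<bar>int (x k) - int ((y(i := v)) k)\<bar>)
       = (\<Sum>k\<in>A. \<bar>int (x k) - int (y k)\<bar>) - \<bar>int (x i) - int (y i)\<bar> + \<bar>int (x i) - int v\<bar>"
proof -
  have "(\<Sum>k\<in>A - {i}. \<bar>int (x k) - int ((y(i := v)) k)\<bar>) = (\<Sum>k\<in>A - {i}. \<bar>int (x k) - int (y k)\<bar>)"
    by (rule sum.cong) auto
  with assms show ?thesis
    by (simp add: sum.remove fun_upd_same del: fun_upd_apply)
qed

lemma f_bidegree_Diff_arc_le:
  assumes "simple_digraph n E" and "(i, j) \<in> E" and "fst z i < fst (bidegree n E) i"
  shows "f n z (bidegree n (E - {(i, j)})) \<le> f n z (bidegree n E)"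
proof -
  have "i < n" "j < n" "finite E"
    using assms(1,2) simple_digraph_finite by (auto simp: simple_digraph_def)
  define dout din where "dout = fst (bidegree n E)" and "din = snd (bidegree n E)"
  have "f n z (bidegree n (E - {(i, j)}))
      = f n z (bidegree n E) - \<bar>int (fst z i) - int (dout i)\<bar> + \<bar>int (fst z i) - int (dout i - 1)\<bar>
          - \<bar>int (snd z j) - int (din j)\<bar> + \<bar>int (snd z j) - int (din j - 1)\<bar>"
    using \<open>i < n\<close> \<open>j < n\<close>
    unfolding f_def bidegree_Diff_arc[OF \<open>finite E\<close> assms(2)] dout_def din_def
    by (simp only: sum_abs_diff_fun_upd finite_lessThan lessThan_iff)
  moreover have "\<bar>int (fst z i) - int (dout i - 1)\<bar> = \<bar>int (fst z i) - int (dout i)\<bar> - 1"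
    using assms(3) unfolding dout_def by linarith
  moreover have "\<bar>int (snd z j) - int (din j - 1)\<bar> \<le> \<bar>int (snd z j) - int (din j)\<bar> + 1"
    by linarith
  ultimately show ?thesis
    by linarith
qed

lemma minimiser_out_le_of_digraph:
  assumes "simple_digraph n E" and "\<forall>a\<in>B n. f n z (bidegree n E) \<le> f n z a"
  shows "\<exists>ds\<in>B n. (\<forall>i<n. fst ds i \<le> fst z i) \<and> f n z ds = f n z (bidegree n E)"
  using assms
proof (induction "card E" arbitrary: E rule: less_induct)
  case less
  show ?case
  proof (cases "\<forall>i<n. fst (bidegree n E) i \<le> fst z i")
    case True
    then show ?thesis
      using less.prems(1) unfolding B_def by blast
  next
    case False
    then obtain i where "i < n" and excess: "fst z i < fst (bidegree n E) i"
      by (auto simp: not_le)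
    then have "card {j. (i, j) \<in> E} > 0"
      by (simp add: bidegree_def)
    then obtain j where arc: "(i, j) \<in> E"
      by (force simp: card_gt_0_iff)
    define E' where "E' = E - {(i, j)}"
    have "simple_digraph n E'"
      using less.prems(1) by (auto simp: E'_def simple_digraph_def)
    then have "bidegree n E' \<in> B n"
      unfolding B_def by blast
    then have same_value: "f n z (bidegree n E') = f n z (bidegree n E)"
      using f_bidegree_Diff_arc_le[OF less.prems(1) arc excess] less.prems(2)
      unfolding E'_def by (meson order_antisym)
    have "card E' < card E"
      unfolding E'_def using simple_digraph_finite[OF less.prems(1)] arc by (rule card_Diff1_less)
    with \<open>simple_digraph n E'\<close> show ?thesis
      using less.hyps[of E'] less.prems(2) same_value by simp
  qed
qed

lemma minimiser_out_le:
  assumes "d \<in> B n" and "\<forall>a\<in>B n. f n z d \<le> f n z a"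
  shows "\<exists>ds\<in>B n. (\<forall>i<n. fst ds i \<le> fst z i) \<and> f n z ds = f n z d"
  using assms minimiser_out_le_of_digraph unfolding B_def by blast

lemma bidegree_converse: "bidegree n (E\<inverse>) = prod.swap (bidegree n E)"
  unfolding bidegree_def converse_iff by simp

lemma swap_mem_B: "prod.swap a \<in> B n \<longleftrightarrow> a \<in> B n"
proof -
  have "prod.swap a \<in> B n" if "a \<in> B n" for a
  proof -
    from that obtain E where "simple_digraph n E" and "a = bidegree n E"
      unfolding B_def by blast
    then have "simple_digraph n (E\<inverse>)" and "prod.swap a = bidegree n (E\<inverse>)"
      by (auto simp: simple_digraph_def bidegree_converse)
    then show ?thesis
      unfolding B_def by blast
  qed
  from this[of a] this[of "prod.swap a"] show ?thesis
    by auto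
qed

lemma f_swap: "f n (prod.swap z) (prod.swap a) = f n z a"
  by (simp add: f_def)

lemma minimiser_in_le:
  assumes "d \<in> B n" and "\<forall>a\<in>B n. f n z d \<le> f n z a"
  shows "\<exists>ds\<in>B n. (\<forall>i<n. snd ds i \<le> snd z i) \<and> f n z ds = f n z d"
proof -
  have "\<forall>a\<in>B n. f n (prod.swap z) (prod.swap d) \<le> f n (prod.swap z) a"
    using assms(2) swap_mem_B f_swap by (metis swap_swap)
  then obtain ds where "ds \<in> B n" "\<forall>i<n. fst ds i \<le> snd z i"
    and "f n (prod.swap z) ds = f n z d"
    using minimiser_out_le[of "prod.swap d" n "prod.swap z"] assms(1) swap_mem_B f_swap by auto
  then show ?thesis
    using swap_mem_B f_swap by (metis fst_swap swap_swap)
qed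

theorem proposition4:
  fixes n :: nat and z d :: "(nat \<Rightarrow> nat) \<times> (nat \<Rightarrow> nat)"
  assumes "d \<in> B n"
    and "\<forall>a \<in> B n. f n z d \<le> f n z a"
  shows "(\<exists>ds \<in> B n. (\<forall>i<n. fst ds i \<le> fst z i) \<and> f n z ds = f n z d)
       \<and> (\<exists>ds \<in> B n. (\<forall>i<n. snd ds i \<le> snd z i) \<and> f n z ds = f n z d)"
  using minimiser_out_le[OF assms] minimiser_in_le[OF assms] by blast

end
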